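(* Sign correctness may fail for multifold edges under monotonic semantics: there exist a gradual semantics $\sigma$ satisfying monotonicity on all acyclic QBAFs, an acyclic QBAF $\mathcal{Q}=\langle\mathcal{A},\mathcal{R}^-,\mathcal{R}^+,\tau\rangle$, an argument $\alpha\in\mathcal{A}$ and an edge $r\in\mathcal{R}$ that is multifold w.r.t. $\alpha$ such that sign correctness fails, i.e. either $r\in\mathcal{R}^-$ and $\phi^\alpha_\sigma(r)>0$, or $r\in\mathcal{R}^+$ and $\phi^\alpha_\sigma(r)<0$.
   Context: A QBAF is a quadruple $\mathcal{Q}=\langle\mathcal{A},\mathcal{R}^-,\mathcal{R}^+,\tau\rangle$ with $\mathcal{A}$ a finite set of arguments, $\mathcal{R}^-,\mathcal{R}^+\subseteq\mathcal{A}\times\mathcal{A}$ disjoint attack and support relations, and $\tau:\mathcal{A}\to[0,1]$ base scores; $\mathcal{R}=\mathcal{R}^-\cup\mathcal{R}^+$, $\mathcal{R}(\beta)=\{(\beta,\gamma)\in\mathcal{R}\}$; acyclic means $(\mathcal{A},\mathcal{R})$ has no directed cycle. A gradual semantics $\sigma$ assigns strengths in $[0,1]$ to arguments of QBAFs. For $\mathcal{S}\subseteq\mathcal{R}$, $\sigma_{\mathcal{S}}(\alpha)$ is the strength of $\alpha$ in $\langle\mathcal{A},\mathcal{R}^-\cap\mathcal{S},\mathcal{R}^+\cap\mathcal{S},\tau\rangle$; for $\tau':\mathcal{A}\to[0,1]$, $\sigma_{\tau'}(\alpha)$ is the strength of $\alpha$ in $\langle\mathcal{A},\mathcal{R}^-,\mathcal{R}^+,\tau'\rangle$.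 The RAE is $\phi^\alpha_\sigma(r)=\sum_{\mathcal{S}\subseteq\mathcal{R}\setminus\{r\}}\frac{(|\mathcal{R}|-|\mathcal{S}|-1)!|\mathcal{S}|!}{|\mathcal{R}|!}[\sigma_{\mathcal{S}\cup\{r\}}(\alpha)-\sigma_{\mathcal{S}}(\alpha)]$. $\sigma$ satisfies monotonicity on a class of QBAFs if for every QBAF in the class, every $\alpha,\beta\in\mathcal{A}$ with $\alpha\neq\beta$ and $\mathcal{R}(\beta)=\{(\beta,\alpha)\}$, and every $\tau':\mathcal{A}\to[0,1]$: (1) if $(\beta,\alpha)\in\mathcal{R}^-$ then $\sigma(\alpha)\le\sigma_{\mathcal{R}\setminus\{(\beta,\alpha)\}}(\alpha)$; (2) if $(\beta,\alpha)\in\mathcal{R}^+$ then $\sigma(\alpha)\ge\sigma_{\mathcal{R}\setminus\{(\beta,\alpha)\}}(\alpha)$; (3) if $(\beta,\alpha)\in\mathcal{R}^-$, $\tau(\beta)\le\tau'(\beta)$ and $\tau'=\tau$ on $\mathcal{A}\setminus\{\beta\}$, then $\sigma(\alpha)\ge\sigma_{\tau'}(\alpha)$; (4) if $(\beta,\alpha)\in\mathcal{R}^+$, $\tau(\beta)\le\tau'(\beta)$ and $\tau'=\tau$ on $\mathcal{A}\setminus\{\beta\}$, then $\sigma(\alpha)\le\sigma_{\tau'}(\alpha)$. A path from $\gamma$ to $\alpha$ is a finite sequence of edges $(x_0,x_1),\dots,(x_{k-1},x_k)\in\mathcal{R}$ with $x_0=\gamma$, $x_k=\alpha$. An edge $(\beta,\gamma)\in\mathcal{R}$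 with $\beta\neq\alpha$ is multifold w.r.t. $\alpha$ if $\gamma\neq\alpha$ and there is more than one path from $\gamma$ to $\alpha$ in $\mathcal{Q}$. *)

theory Defs
  imports Complex_Main
begin

text \<open>A QBAF over arguments of type 'a: arguments, attacks, supports, base scores.
  Base scores are functions on the whole type, normalised to 0 outside the argument set.\<close>
record 'a qbaf =
  qargs :: "'a set"
  qatt  :: "('a \<times> 'a) set"
  qsupp :: "('a \<times> 'a) set"
  qtau  :: "'a \<Rightarrow> real"

definition qrel :: "'a qbaf \<Rightarrow> ('a \<times> 'a) set" where
  "qrel Q = qatt Q \<union> qsupp Q"

definition wf_qbaf :: "'a qbaf \<Rightarrow> bool" where
  "wf_qbaf Q \<longleftrightarrow> finite (qargs Q) \<and> qrel Q \<subseteq> qargs Q \<times> qargs Q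
     \<and> qatt Q \<inter> qsupp Q = {}
     \<and> (\<forall>x\<in>qargs Q. 0 \<le> qtau Q x \<and> qtau Q x \<le> 1)
     \<and> (\<forall>x. x \<notin> qargs Q \<longrightarrow> qtau Q x = 0)"

definition acyclic_qbaf :: "'a qbaf \<Rightarrow> bool" where
  "acyclic_qbaf Q \<longleftrightarrow> acyclic (qrel Q)"

definition out_edges :: "'a qbaf \<Rightarrow> 'a \<Rightarrow> ('a \<times> 'a) set" where
  "out_edges Q b = {e \<in> qrel Q. fst e = b}"

definition restr :: "'a qbaf \<Rightarrow> ('a \<times> 'a) set \<Rightarrow> 'a qbaf" where
  "restr Q S = Q\<lparr>qatt := qatt Q \<inter> S, qsupp := qsupp Q \<inter> S\<rparr>"

definition gradual_semantics :: "('a qbaf \<Rightarrow> 'a \<Rightarrow> real) \<Rightarrow> bool" where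
  "gradual_semantics \<sigma> \<longleftrightarrow>
     (\<forall>Q. wf_qbaf Q \<longrightarrow> (\<forall>a\<in>qargs Q. 0 \<le> \<sigma> Q a \<and> \<sigma> Q a \<le> 1))"

definition monotonic_acyclic :: "('a qbaf \<Rightarrow> 'a \<Rightarrow> real) \<Rightarrow> bool" where
  "monotonic_acyclic \<sigma> \<longleftrightarrow>
     (\<forall>Q. wf_qbaf Q \<and> acyclic_qbaf Q \<longrightarrow>
       (\<forall>a\<in>qargs Q. \<forall>b\<in>qargs Q. a \<noteq> b \<and> out_edges Q b = {(b, a)} \<longrightarrow>
          ((b, a) \<in> qatt Q \<longrightarrow> \<sigma> Q a \<le> \<sigma> (restr Q (qrel Q - {(b, a)})) a)
        \<and> ((b, a) \<in> qsupp Q \<longrightarrow> \<sigma> Q a \<ge> \<sigma> (restr Q (qrel Q - {(b, a)})) a)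
        \<and> (\<forall>\<tau>'. wf_qbaf (Q\<lparr>qtau := \<tau>'\<rparr>) \<and> qtau Q b \<le> \<tau>' b
               \<and> (\<forall>x\<in>qargs Q - {b}. \<tau>' x = qtau Q x) \<longrightarrow>
             ((b, a) \<in> qatt Q \<longrightarrow> \<sigma> Q a \<ge> \<sigma> (Q\<lparr>qtau := \<tau>'\<rparr>) a)
           \<and> ((b, a) \<in> qsupp Q \<longrightarrow> \<sigma> Q a \<le> \<sigma> (Q\<lparr>qtau := \<tau>'\<rparr>) a))))"

definition is_path :: "('a \<times> 'a) set \<Rightarrow> 'a \<Rightarrow> 'a \<Rightarrow> ('a \<times> 'a) list \<Rightarrow> bool" where
  "is_path R x y es \<longleftrightarrow> es \<noteq> [] \<and> set es \<subseteq> R \<and> fst (hd es) = x \<and> snd (last es) = y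
     \<and> (\<forall>i. i + 1 < length es \<longrightarrow> snd (es ! i) = fst (es ! (i + 1)))"

definition multifold :: "'a qbaf \<Rightarrow> 'a \<Rightarrow> ('a \<times> 'a) \<Rightarrow> bool" where
  "multifold Q a r \<longleftrightarrow> r \<in> qrel Q \<and> fst r \<noteq> a \<and> snd r \<noteq> a
     \<and> (\<exists>p1 p2. p1 \<noteq> p2 \<and> is_path (qrel Q) (snd r) a p1 \<and> is_path (qrel Q) (snd r) a p2)"

text \<open>Relation attribution explanation (Shapley value of the edge r for the strength of a).\<close>
definition RAE :: "('a qbaf \<Rightarrow> 'a \<Rightarrow> real) \<Rightarrow> 'a qbaf \<Rightarrow> 'a \<Rightarrow> ('a \<times> 'a) \<Rightarrow> real" where
  "RAE \<sigma> Q a r = (\<Sum>S\<in>Pow (qrel Q - {r}).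
     (fact (card (qrel Q) - card S - 1) * fact (card S) / fact (card (qrel Q)))
     * (\<sigma> (restr Q (S \<union> {r})) a - \<sigma> (restr Q S) a))"

end

theory Submission
  imports Defs
begin

text \<open>Monotonicity only constrains an edge \<open>(\<beta>, \<alpha>)\<close> whose source has no other outgoing edge.
  A semantics may therefore reward an argument \<open>x\<close> for having an attacked parent that also
  feeds some other argument: such a parent is never the \<open>\<beta>\<close> of a monotonicity condition.
  In the QBAF with attack \<open>3 \<rightarrow> 1\<close> and supports \<open>1 \<rightarrow> 0\<close>, \<open>1 \<rightarrow> 2\<close>, \<open>2 \<rightarrow> 0\<close>, the attack
  on \<open>1\<close> is multifold w.r.t. \<open>0\<close> and adding it never lowers, and sometimes raises, the
  strength of \<open>0\<close>, so its Shapley attribution is positive.\<close>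

definition attacked_fork :: "'a qbaf \<Rightarrow> 'a \<Rightarrow> 'a \<Rightarrow> bool" where
  "attacked_fork Q x g \<longleftrightarrow> g \<noteq> x \<and> g \<in> Range (qatt Q) \<and> (g, x) \<in> qrel Q
     \<and> (\<exists>y. y \<noteq> x \<and> (g, y) \<in> qrel Q)"

definition fork_sem :: "'a qbaf \<Rightarrow> 'a \<Rightarrow> real" where
  "fork_sem Q x = (if \<exists>g. attacked_fork Q x g then 3/4 else 1/2)"

lemma attacked_fork_restrD: "attacked_fork (restr Q S) x g \<Longrightarrow> attacked_fork Q x g"
  unfolding attacked_fork_def restr_def qrel_def by auto

lemma fork_sem_qtau_update [simp]: "fork_sem (Q\<lparr>qtau := \<tau>'\<rparr>) = fork_sem Q"
  unfolding fork_sem_def attacked_fork_def qrel_def by simp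

lemma attacked_fork_remove_single_out_edge:
  assumes "out_edges Q b = {(b, a)}" and "attacked_fork Q a g"
  shows "attacked_fork (restr Q (qrel Q - {(b, a)})) a g"
proof -
  obtain y where y: "y \<noteq> a" "(g, y) \<in> qrel Q"
    using assms(2) unfolding attacked_fork_def by blast
  have "g \<noteq> b"
  proof
    assume "g = b"
    then have "(g, y) \<in> out_edges Q b" using y by (simp add: out_edges_def)
    then show False using assms(1) y(1) by simp
  qed
  then show ?thesis
    using assms(2) y unfolding attacked_fork_def restr_def qrel_def by auto
qed

lemma fork_sem_remove_single_out_edge:
  assumes "out_edges Q b = {(b, a)}"
  shows "fork_sem (restr Q (qrel Q - {(b, a)})) a = fork_sem Q a"
  unfolding fork_sem_def
  using attacked_fork_remove_single_out_edge[OF assms] attacked_fork_restrD by metis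

lemma gradual_semantics_fork_sem: "gradual_semantics fork_sem"
  unfolding gradual_semantics_def fork_sem_def by simp

lemma monotonic_acyclic_fork_sem: "monotonic_acyclic fork_sem"
  unfolding monotonic_acyclic_def
  by (simp add: fork_sem_remove_single_out_edge)

lemma RAE_pos_if_adding_edge_helps:
  assumes "finite (qrel Q)"
    and "\<And>S. S \<subseteq> qrel Q - {r} \<Longrightarrow> \<sigma> (restr Q S) a \<le> \<sigma> (restr Q (S \<union> {r})) a"
    and "S\<^sub>0 \<subseteq> qrel Q - {r}" "\<sigma> (restr Q S\<^sub>0) a < \<sigma> (restr Q (S\<^sub>0 \<union> {r})) a"
  shows "RAE \<sigma> Q a r > 0"
  unfolding RAE_def
proof (rule sum_pos2)
  show "finite (Pow (qrel Q - {r}))" using assms(1) by simp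
  show "S\<^sub>0 \<in> Pow (qrel Q - {r})" using assms(3) by simp
  show "0 < fact (card (qrel Q) - card S\<^sub>0 - 1) * fact (card S\<^sub>0) / fact (card (qrel Q))
          * (\<sigma> (restr Q (S\<^sub>0 \<union> {r})) a - \<sigma> (restr Q S\<^sub>0) a)"
    using assms(4) by (simp add: fact_gt_zero)
  fix S assume "S \<in> Pow (qrel Q - {r})"
  then show "0 \<le> fact (card (qrel Q) - card S - 1) * fact (card S) / fact (card (qrel Q))
          * (\<sigma> (restr Q (S \<union> {r})) a - \<sigma> (restr Q S) a)"
    using assms(2) by simp
qed

definition fork_example :: "nat qbaf" where
  "fork_example = \<lparr>qargs = {0, 1, 2, 3}, qatt = {(3, 1)}, qsupp = {(1, 0), (1, 2), (2, 0)},
     qtau = (\<lambda>_. 0)\<rparr>"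

lemma qrel_fork_example: "qrel fork_example = {(3, 1), (1, 0), (1, 2), (2, 0)}"
  by (auto simp: qrel_def fork_example_def)

lemma wf_fork_example: "wf_qbaf fork_example"
  unfolding wf_qbaf_def qrel_fork_example by (auto simp: fork_example_def)

lemma acyclic_fork_example: "acyclic_qbaf fork_example"
proof -
  define depth :: "nat \<Rightarrow> nat"
    where "depth x = (if x = 3 then 0 else if x = 1 then 1 else if x = 2 then 2 else 3)" for x
  have "qrel fork_example \<subseteq> inv_image less_than depth"
    by (auto simp: qrel_fork_example depth_def)
  then have "wf (qrel fork_example)" by (rule wf_subset[OF wf_inv_image[OF wf_less_than]])
  then show ?thesis unfolding acyclic_qbaf_def by (rule wf_acyclic)
qed

lemma multifold_fork_example: "multifold fork_example 0 (3, 1)"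
proof -
  have "is_path (qrel fork_example) 1 0 [(1, 0)]"
    and "is_path (qrel fork_example) 1 0 [(1, 2), (2, 0)]"
    unfolding is_path_def qrel_fork_example by (auto simp: less_Suc_eq)
  then have "\<exists>p1 p2. p1 \<noteq> p2 \<and> is_path (qrel fork_example) 1 0 p1
      \<and> is_path (qrel fork_example) 1 0 p2"
    by (intro exI[of _ "[(1, 0)]"] exI[of _ "[(1, 2), (2, 0)]"]) simp
  then show ?thesis
    unfolding multifold_def by (simp add: qrel_fork_example)
qed

lemma fork_sem_fork_example:
  "S \<subseteq> qrel fork_example \<Longrightarrow> fork_sem (restr fork_example S) 0
     = (if (3, 1) \<in> S \<and> (1, 0) \<in> S \<and> (1, 2) \<in> S then 3/4 else 1/2)"
  unfolding fork_sem_def attacked_fork_def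
  by (auto simp: restr_def qrel_def fork_example_def) (metis zero_neq_numeral)+

lemma RAE_fork_example_pos: "RAE fork_sem fork_example 0 (3, 1) > 0"
proof (rule RAE_pos_if_adding_edge_helps)
  show "finite (qrel fork_example)" by (simp add: qrel_fork_example)
  show "fork_sem (restr fork_example S) 0 \<le> fork_sem (restr fork_example (S \<union> {(3, 1)})) 0"
    if "S \<subseteq> qrel fork_example - {(3, 1)}" for S
    using that by (simp add: fork_sem_fork_example qrel_fork_example subset_iff)
  show "{(1, 0), (1, 2)} \<subseteq> qrel fork_example - {(3, 1)}" by (simp add: qrel_fork_example)
  show "fork_sem (restr fork_example {(1, 0), (1, 2)}) 0
      < fork_sem (restr fork_example ({(1, 0), (1, 2)} \<union> {(3, 1)})) 0"
    by (simp add: fork_sem_fork_example qrel_fork_example)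
qed

theorem proposition8:
  shows "\<exists>(\<sigma> :: nat qbaf \<Rightarrow> nat \<Rightarrow> real) Q a r.
           gradual_semantics \<sigma> \<and> monotonic_acyclic \<sigma>
         \<and> wf_qbaf Q \<and> acyclic_qbaf Q \<and> a \<in> qargs Q \<and> r \<in> qrel Q \<and> multifold Q a r
         \<and> ((r \<in> qatt Q \<and> RAE \<sigma> Q a r > 0) \<or> (r \<in> qsupp Q \<and> RAE \<sigma> Q a r < 0))"
proof (intro exI conjI)
  show "gradual_semantics fork_sem" by (rule gradual_semantics_fork_sem)
  show "monotonic_acyclic fork_sem" by (rule monotonic_acyclic_fork_sem)
  show "wf_qbaf fork_example" by (rule wf_fork_example)
  show "acyclic_qbaf fork_example" by (rule acyclic_fork_example)
  show "multifold fork_example 0 (3, 1)" by (rule multifold_fork_example)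
  show "0 \<in> qargs fork_example" by (simp add: fork_example_def)
  show "(3, 1) \<in> qrel fork_example" by (simp add: qrel_fork_example)
  show "(3, 1) \<in> qatt fork_example \<and> RAE fork_sem fork_example 0 (3, 1) > 0
      \<or> (3, 1) \<in> qsupp fork_example \<and> RAE fork_sem fork_example 0 (3, 1) < 0"
    using RAE_fork_example_pos by (simp add: fork_example_def)
qed

end
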